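(* Let $q$ be a prime power, $q-1=ds$ with $d,s$ positive integers, let $r_0,\dots,r_{d-1}$ be positive integers, let $a_0,\dots,a_{d-1}\in\mathbb{F}_q^*$, let $\xi$ be a primitive element of $\mathbb{F}_q$ and $\omega=\xi^s$. Let $$f(x)=\frac{1}{d}\sum_{i=0}^{d-1}\sum_{j=0}^{d-1} a_i\,\omega^{-ij}\,x^{r_i+js}\in\mathbb{F}_q[x].$$ If $f$ is a permutation polynomial of $\mathbb{F}_q$, then its inverse over $\mathbb{F}_q$ is given by $$f^{-1}(x)=\frac{1}{d}\sum_{i=0}^{d-1}\sum_{j=0}^{d-1}\omega^{i(t_i-jr_i)}\left(\frac{x}{a_i}\right)^{\tilde r_i+js},$$ where $\tilde r_i,t_i\in\mathbb{Z}$ satisfy $1\le \tilde r_i<s$ and $r_i\tilde r_i+st_i=1$ (for each $i=0,\dots,d-1$).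
   Context: A polynomial $f\in\mathbb{F}_q[x]$ is a permutation polynomial of $\mathbb{F}_q$ if it induces a bijection of $\mathbb{F}_q$. A polynomial $g$ is the inverse of $f$ over $\mathbb{F}_q$ if $g(f(c))=c$ for all $c\in\mathbb{F}_q$ (equivalently $g(f(x))\equiv x\pmod{x^q-x}$). Since $d\mid q-1$, $d$ is invertible in $\mathbb{F}_q$, so $1/d$ makes sense. (The polynomial $f$ is the cyclotomic mapping with $f(0)=0$ and $f(x)=a_ix^{r_i}$ for $x\in\xi^i\langle\xi^d\rangle$.) *)

theory Defs
  imports "HOL-Computational_Algebra.Polynomial"
begin

definition primitive_element :: "'a::{field,finite} \<Rightarrow> bool" where
  "primitive_element \<xi> \<longleftrightarrow> \<xi> \<noteq> 0 \<and> (\<forall>x. x \<noteq> 0 \<longrightarrow> (\<exists>k::nat. x = \<xi> ^ k))"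

definition perm_poly :: "'a::{field,finite} poly \<Rightarrow> bool" where
  "perm_poly f \<longleftrightarrow> bij (poly f)"

end

theory Submission
  imports Defs
begin

text \<open>On the coset \<open>{c. c ^ s = \<omega> ^ k}\<close> of the group of \<open>s\<close>-th roots of unity, the
  orthogonality relation \<open>\<Sum>j<d. (\<omega> ^ k / \<omega> ^ i) ^ j = d \<cdot> [i = k]\<close> collapses the double sum
  defining \<open>f\<close> to the monomial \<open>a\<^sub>k c ^ r\<^sub>k\<close>. Likewise, at \<open>y \<noteq> 0\<close> the proposed inverse is the sum
  of the terms \<open>\<omega> ^ (i t\<^sub>i) (y / a\<^sub>i) ^ r\<^sub>i'\<close> over the indices \<open>i\<close> with
  \<open>(y / a\<^sub>i) ^ s = \<omega> ^ (i r\<^sub>i)\<close>. Because \<open>r\<^sub>i r\<^sub>i' + s t\<^sub>i = 1\<close>, every such index produces a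
  preimage of \<open>y\<close> in the \<open>i\<close>-th coset; for \<open>y = f c\<close>, injectivity of \<open>f\<close> leaves only the
  index of the coset of \<open>c\<close>, whose term is \<open>(c ^ s) ^ t\<^sub>k (c ^ r\<^sub>k) ^ r\<^sub>k' = c\<close>.\<close>

lemma finite_field_power_card_minus_one:
  fixes x :: "'a::{field,finite}"
  assumes "x \<noteq> 0"
  shows "x ^ (card (UNIV :: 'a set) - 1) = 1"
proof -
  have "(\<Prod>y\<in>UNIV - {0}. x * y) = x ^ (card (UNIV :: 'a set) - 1) * \<Prod>(UNIV - {0::'a})"
    by (simp add: prod.distrib card_Diff_singleton)
  moreover have "(\<Prod>y\<in>UNIV - {0}. x * y) = \<Prod>(UNIV - {0::'a})"
    by (rule prod.reindex_bij_witness[of _ "\<lambda>y. y / x" "\<lambda>y. x * y"]) (use assms in auto)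
  ultimately show ?thesis
    by (simp add: prod_zero_iff)
qed

text \<open>Translation by \<open>1\<close> permutes the ring, so adding \<open>1\<close> to every element leaves the sum
  of all elements unchanged.\<close>
lemma of_nat_card_eq_0:
  "of_nat (card (UNIV :: 'a::{ring_1,finite} set)) = (0 :: 'a)"
proof -
  have "(\<Sum>x\<in>UNIV. x + 1) = (\<Sum>x\<in>UNIV. x :: 'a)"
    by (rule sum.reindex_bij_witness[of _ "\<lambda>x. x - 1" "\<lambda>x. x + 1"]) auto
  then show ?thesis
    by (simp add: sum.distrib)
qed

lemma of_nat_card_minus_one:
  "of_nat (card (UNIV :: 'a::{ring_1,finite} set) - 1) = (-1 :: 'a)"
proof -
  obtain n where n: "card (UNIV :: 'a set) = Suc n"
    using gr0_implies_Suc[of "card (UNIV :: 'a set)"] by (auto simp: card_gt_0_iff)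
  have "of_nat (card (UNIV :: 'a set)) = (0 :: 'a)"
    by (rule of_nat_card_eq_0)
  then have "1 + of_nat n = (0 :: 'a)"
    by (simp add: n)
  then show ?thesis
    by (simp add: n eq_neg_iff_add_eq_0 add.commute)
qed

lemma of_nat_dvd_card_minus_one_neq_0:
  assumes "d dvd card (UNIV :: 'a::{field,finite} set) - 1"
  shows "of_nat d \<noteq> (0 :: 'a)"
proof
  assume "of_nat d = (0 :: 'a)"
  with assms have "of_nat (card (UNIV :: 'a set) - 1) = (0 :: 'a)"
    by (auto elim: dvdE)
  then show False
    using of_nat_card_minus_one[where 'a = 'a] by simp
qed

lemma card_field_minus_one_pos:
  "0 < card (UNIV :: 'a::{field,finite} set) - 1"
proof -
  have "card {0, 1 :: 'a} \<le> card (UNIV :: 'a set)"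
    by (rule card_mono) simp_all
  then show ?thesis
    by simp
qed

text \<open>If \<open>\<xi> ^ b = 1\<close> with \<open>0 < b < q - 1\<close>, the powers \<open>\<xi> ^ k\<close>, \<open>k < b\<close>, would already exhaust
  the \<open>q - 1\<close> units.\<close>
lemma primitive_element_power_eq_1_iff:
  fixes \<xi> :: "'a::{field,finite}"
  assumes "primitive_element \<xi>"
  shows "\<xi> ^ m = 1 \<longleftrightarrow> (card (UNIV :: 'a set) - 1) dvd m"
proof
  assume "(card (UNIV :: 'a set) - 1) dvd m"
  then obtain k where "m = (card (UNIV :: 'a set) - 1) * k" ..
  then show "\<xi> ^ m = 1"
    using assms finite_field_power_card_minus_one[of \<xi>]
    by (simp add: primitive_element_def power_mult)
next
  assume m: "\<xi> ^ m = 1"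
  define b where "b = m mod (card (UNIV :: 'a set) - 1)"
  have "\<xi> ^ m = (\<xi> ^ (card (UNIV :: 'a set) - 1)) ^ (m div (card (UNIV :: 'a set) - 1)) * \<xi> ^ b"
    unfolding b_def by (simp flip: power_mult power_add)
  then have b: "\<xi> ^ b = 1"
    using m assms finite_field_power_card_minus_one[of \<xi>] by (simp add: primitive_element_def)
  have "b = 0"
  proof (rule ccontr)
    assume "b \<noteq> 0"
    have "x \<in> (\<lambda>k. \<xi> ^ k) ` {..<b}" if "x \<noteq> 0" for x
    proof -
      obtain k where "x = \<xi> ^ k"
        using assms \<open>x \<noteq> 0\<close> unfolding primitive_element_def by blast
      also have "\<xi> ^ k = (\<xi> ^ b) ^ (k div b) * \<xi> ^ (k mod b)"
        by (simp flip: power_mult power_add)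
      finally have "x = \<xi> ^ (k mod b)"
        using b by simp
      then show ?thesis
        using \<open>b \<noteq> 0\<close> by (intro image_eqI[of _ _ "k mod b"]) simp_all
    qed
    then have "UNIV - {0} \<subseteq> (\<lambda>k. \<xi> ^ k) ` {..<b}"
      by blast
    then have "card (UNIV - {0 :: 'a}) \<le> card {..<b}"
      by (rule surj_card_le[OF finite_lessThan])
    then have "card (UNIV :: 'a set) - 1 \<le> b"
      by (simp add: card_Diff_singleton)
    moreover have "b < card (UNIV :: 'a set) - 1"
      unfolding b_def using card_field_minus_one_pos[where 'a = 'a] by (rule mod_less_divisor)
    ultimately show False
      by simp
  qed
  then show "(card (UNIV :: 'a set) - 1) dvd m"
    unfolding b_def by (simp add: dvd_eq_mod_eq_0)
qed

lemma finite_field_power_power_eq_1: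
  fixes x :: "'a::{field,finite}"
  assumes "x \<noteq> 0" and "card (UNIV :: 'a set) - 1 = d * s"
  shows "(x ^ s) ^ d = 1"
  using assms finite_field_power_card_minus_one[OF assms(1)] by (simp add: mult.commute flip: power_mult)

lemma inj_on_primitive_element_power:
  fixes \<xi> :: "'a::{field,finite}"
  assumes "primitive_element \<xi>" and "card (UNIV :: 'a set) - 1 = d * s" and "0 < s"
  shows "inj_on (\<lambda>i. (\<xi> ^ s) ^ i) {..<d}"
proof (rule linorder_inj_onI')
  fix i k assume "i \<in> {..<d}" "k \<in> {..<d}" "i < k"
  have "\<xi> \<noteq> 0"
    using assms(1) by (simp add: primitive_element_def)
  have "\<not> d * s dvd s * (k - i)"
    using \<open>k \<in> {..<d}\<close> \<open>i < k\<close> \<open>0 < s\<close> by (auto simp: mult.commute[of d] nat_dvd_not_less)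
  then have "\<xi> ^ (s * (k - i)) \<noteq> 1"
    using assms by (simp add: primitive_element_power_eq_1_iff)
  moreover have "\<xi> ^ (s * k) = \<xi> ^ (s * i) * \<xi> ^ (s * (k - i))"
    using \<open>i < k\<close> by (simp flip: power_add add: diff_mult_distrib2)
  ultimately show "(\<xi> ^ s) ^ i \<noteq> (\<xi> ^ s) ^ k"
    using \<open>\<xi> \<noteq> 0\<close> by (auto simp flip: power_mult)
qed

lemma primitive_element_power_coset:
  fixes \<xi> c :: "'a::{field,finite}"
  assumes "primitive_element \<xi>" and "card (UNIV :: 'a set) - 1 = d * s" and "c \<noteq> 0"
  obtains k where "k < d" and "c ^ s = (\<xi> ^ s) ^ k"
proof -
  have "0 < d"
    using assms(2) card_field_minus_one_pos[where 'a = 'a] by simp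
  obtain m where "c = \<xi> ^ m"
    using assms(1,3) by (auto simp: primitive_element_def)
  then have "c ^ s = (\<xi> ^ s) ^ (d * (m div d) + m mod d)"
    by (simp flip: power_mult add: mult.commute)
  also have "\<dots> = ((\<xi> ^ s) ^ d) ^ (m div d) * (\<xi> ^ s) ^ (m mod d)"
    by (simp only: power_add power_mult)
  finally have "c ^ s = (\<xi> ^ s) ^ (m mod d)"
    using finite_field_power_power_eq_1[OF _ assms(2), of \<xi>] assms(1)
    by (simp add: primitive_element_def)
  then show thesis
    using that[of "m mod d"] \<open>0 < d\<close> by simp
qed

lemma sum_powers_quotient_roots_of_unity:
  fixes u v :: "'a::field"
  assumes "u ^ d = 1" and "v ^ d = 1"
  shows "(\<Sum>j<d. (u / v) ^ j) = (if u = v then of_nat d else 0)"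
proof (cases "d = 0")
  case False
  then have "v \<noteq> 0"
    using assms(2) by (auto simp: power_0_left)
  then have "(u / v) ^ d = 1"
    using assms by (simp add: power_divide)
  then show ?thesis
    using \<open>v \<noteq> 0\<close> by (simp add: geometric_sum)
qed simp

lemma power_bezout_decompose:
  fixes c :: "'a::field"
  assumes "c \<noteq> 0" and "int r * int rt + int s * t = 1"
  shows "(c ^ s) powi t * (c ^ r) ^ rt = c"
proof -
  have "(c ^ s) powi t * (c ^ r) ^ rt = c powi (int s * t) * c powi (int r * int rt)"
    by (metis power_int_of_nat power_int_power)
  also have "\<dots> = c powi (int r * int rt + int s * t)"
    using assms(1) by (simp add: power_int_add add.commute)
  finally show ?thesis
    using assms(2) by simp
qed

lemma power_bezout_root:
  fixes x w :: "'a::field"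
  assumes "x \<noteq> 0" and "w \<noteq> 0" and "x ^ s = w ^ r" and "int r * int rt + int s * t = 1"
  defines "c \<equiv> w powi t * x ^ rt"
  shows "c ^ s = w" and "c ^ r = x"
proof -
  have "c ^ s = w powi (int s * t) * (x ^ s) ^ rt"
    unfolding c_def by (simp add: power_mult_distrib power_int_power' mult.commute flip: power_mult)
  also have "\<dots> = w powi (int s * t) * w powi (int r * int rt)"
    using assms(3) by (metis power_int_of_nat power_int_power)
  also have "\<dots> = w powi (int r * int rt + int s * t)"
    using assms(2) by (simp add: power_int_add add.commute)
  finally show "c ^ s = w"
    using assms(4) by simp
  have "x ^ (r * rt) = x powi (1 - int s * t)"
    using assms(4) by (metis eq_diff_eq of_nat_mult power_int_of_nat)
  also have "\<dots> = x * (x ^ s) powi (- t)"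
    using assms(1) by (simp add: power_int_diff power_int_power power_int_minus divide_inverse)
  finally have "c ^ r = w powi (int r * t) * (x * (w ^ r) powi (- t))"
    unfolding c_def using assms(3) by (simp add: power_mult_distrib power_int_power' mult.commute flip: power_mult)
  also have "\<dots> = x"
    using assms(2) by (simp add: power_int_power power_int_minus)
  finally show "c ^ r = x" .
qed

lemma root_of_unity_nonzero:
  fixes \<omega> :: "'a::field"
  assumes "\<omega> ^ d = 1" and "of_nat d \<noteq> (0 :: 'a)"
  shows "\<omega> \<noteq> 0"
  using assms by (auto simp: power_0_left split: if_splits)

lemma root_of_unity_power:
  fixes \<omega> :: "'a::comm_monoid_mult"
  assumes "\<omega> ^ d = 1"
  shows "(\<omega> ^ n) ^ d = 1"
  using assms by (metis mult.commute power_mult power_one)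

definition cyclotomic_mapping_poly ::
    "nat \<Rightarrow> nat \<Rightarrow> 'a::field \<Rightarrow> (nat \<Rightarrow> 'a) \<Rightarrow> (nat \<Rightarrow> nat) \<Rightarrow> 'a poly" where
  "cyclotomic_mapping_poly d s \<omega> a r = smult (inverse (of_nat d))
     (\<Sum>i<d. \<Sum>j<d. monom (a i * \<omega> powi (- (int i * int j))) (r i + j * s))"

definition cyclotomic_mapping_inverse_poly ::
    "nat \<Rightarrow> nat \<Rightarrow> 'a::field \<Rightarrow> (nat \<Rightarrow> 'a) \<Rightarrow> (nat \<Rightarrow> nat) \<Rightarrow> (nat \<Rightarrow> nat) \<Rightarrow> (nat \<Rightarrow> int)
      \<Rightarrow> 'a poly" where
  "cyclotomic_mapping_inverse_poly d s \<omega> a r rt t = smult (inverse (of_nat d))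
     (\<Sum>i<d. \<Sum>j<d. smult (\<omega> powi (int i * (t i - int j * int (r i))))
                          ([:0, inverse (a i):] ^ (rt i + j * s)))"

lemma poly_cyclotomic_mapping_poly:
  fixes \<omega> c :: "'a::field"
  assumes "\<omega> ^ d = 1" and "inj_on (\<lambda>i. \<omega> ^ i) {..<d}" and "of_nat d \<noteq> (0 :: 'a)"
    and "k < d" and "c ^ s = \<omega> ^ k"
  shows "poly (cyclotomic_mapping_poly d s \<omega> a r) c = a k * c ^ r k"
proof -
  have summand: "a i * \<omega> powi (- (int i * int j)) * c ^ (r i + j * s)
      = a i * c ^ r i * (\<omega> ^ k / \<omega> ^ i) ^ j" for i j
  proof -
    have "\<omega> powi (- (int i * int j)) = inverse ((\<omega> ^ i) ^ j)"
      by (simp add: power_int_minus power_mult flip: of_nat_mult)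
    also have "\<dots> = (1 / \<omega> ^ i) ^ j"
      by (simp add: power_one_over inverse_eq_divide)
    moreover have "c ^ (r i + j * s) = c ^ r i * (\<omega> ^ k) ^ j"
      using assms(5) by (simp add: power_add mult.commute[of j] power_mult)
    ultimately show ?thesis
      by (simp add: power_divide)
  qed
  have "poly (cyclotomic_mapping_poly d s \<omega> a r) c
      = inverse (of_nat d) * (\<Sum>i<d. a i * c ^ r i * (\<Sum>j<d. (\<omega> ^ k / \<omega> ^ i) ^ j))"
    by (simp add: cyclotomic_mapping_poly_def poly_sum poly_monom summand sum_distrib_left)
  also have "\<dots> = inverse (of_nat d) * (\<Sum>i<d. if i = k then a i * c ^ r i * of_nat d else 0)"
  proof (intro arg_cong[where f = "\<lambda>x. _ * x"] sum.cong refl)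
    fix i assume "i \<in> {..<d}"
    have "\<omega> ^ k = \<omega> ^ i \<longleftrightarrow> i = k"
      using assms(2,4) \<open>i \<in> {..<d}\<close> by (auto dest: inj_onD)
    then show "a i * c ^ r i * (\<Sum>j<d. (\<omega> ^ k / \<omega> ^ i) ^ j)
        = (if i = k then a i * c ^ r i * of_nat d else 0)"
      using root_of_unity_power[OF assms(1)] by (simp add: sum_powers_quotient_roots_of_unity)
  qed
  also have "\<dots> = a k * c ^ r k"
    using assms(3,4) by simp
  finally show ?thesis .
qed

lemma poly_cyclotomic_mapping_inverse_poly:
  fixes \<omega> y :: "'a::field"
  assumes "\<omega> ^ d = 1" and "of_nat d \<noteq> (0 :: 'a)" and "\<forall>i<d. ((y / a i) ^ s) ^ d = 1"
  shows "poly (cyclotomic_mapping_inverse_poly d s \<omega> a r rt t) y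
    = (\<Sum>i | i < d \<and> (y / a i) ^ s = \<omega> ^ (i * r i). \<omega> powi (int i * t i) * (y / a i) ^ rt i)"
proof -
  have summand: "\<omega> powi (int i * (t i - int j * int (r i))) * (y / a i) ^ (rt i + j * s)
      = \<omega> powi (int i * t i) * (y / a i) ^ rt i * ((y / a i) ^ s / \<omega> ^ (i * r i)) ^ j" for i j
  proof -
    have "int i * (t i - int j * int (r i)) = int i * t i - int (i * r i * j)"
      by (simp add: algebra_simps)
    then have "\<omega> powi (int i * (t i - int j * int (r i))) = \<omega> powi (int i * t i) / (\<omega> ^ (i * r i)) ^ j"
      using root_of_unity_nonzero[OF assms(1,2)]
      by (simp add: power_int_diff power_mult del: of_nat_mult)
    moreover have "(y / a i) ^ (rt i + j * s) = (y / a i) ^ rt i * ((y / a i) ^ s) ^ j"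
      by (simp add: power_add mult.commute[of j] power_mult)
    ultimately show ?thesis
      by (simp only: power_divide) (simp add: divide_inverse)
  qed
  have "poly (cyclotomic_mapping_inverse_poly d s \<omega> a r rt t) y
      = inverse (of_nat d) * (\<Sum>i<d. \<omega> powi (int i * t i) * (y / a i) ^ rt i
          * (\<Sum>j<d. ((y / a i) ^ s / \<omega> ^ (i * r i)) ^ j))"
    by (simp add: cyclotomic_mapping_inverse_poly_def poly_sum summand sum_distrib_left
        flip: divide_inverse)
  also have "\<dots> = (\<Sum>i<d. if (y / a i) ^ s = \<omega> ^ (i * r i)
      then \<omega> powi (int i * t i) * (y / a i) ^ rt i else 0)"
    using root_of_unity_power[OF assms(1)] assms(2,3)
    by (simp add: sum_powers_quotient_roots_of_unity sum_distrib_left) (intro sum.cong; simp)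
  also have "\<dots> = (\<Sum>i | i < d \<and> (y / a i) ^ s = \<omega> ^ (i * r i). \<omega> powi (int i * t i) * (y / a i) ^ rt i)"
    unfolding sum.inter_filter[OF finite_lessThan, symmetric] by simp
  finally show ?thesis .
qed

lemma poly_cyclotomic_mapping_poly_0:
  assumes "\<forall>i<d. 0 < r i"
  shows "poly (cyclotomic_mapping_poly d s \<omega> a r) 0 = 0"
  using assms by (auto simp: cyclotomic_mapping_poly_def poly_sum poly_monom intro!: sum.neutral)

lemma poly_cyclotomic_mapping_inverse_poly_0:
  assumes "\<forall>i<d. 0 < rt i"
  shows "poly (cyclotomic_mapping_inverse_poly d s \<omega> a r rt t) 0 = 0"
  using assms by (auto simp: cyclotomic_mapping_inverse_poly_def poly_sum intro!: sum.neutral)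

text \<open>If \<open>y = f c\<close> satisfies the \<open>i\<close>-th condition, then \<open>c' = \<omega> ^ (i t\<^sub>i) (y / a\<^sub>i) ^ r\<^sub>i'\<close> lies in
  the \<open>i\<close>-th coset with \<open>f c' = y\<close>, so injectivity forces \<open>c' = c\<close> and hence \<open>i = k\<close>.\<close>
lemma cyclotomic_mapping_inverse_index:
  fixes \<omega> c :: "'a::field" and a :: "nat \<Rightarrow> 'a" and d s :: nat and r :: "nat \<Rightarrow> nat"
  defines "f \<equiv> cyclotomic_mapping_poly d s \<omega> a r"
  assumes root: "\<omega> ^ d = 1" and inj_root: "inj_on (\<lambda>i. \<omega> ^ i) {..<d}"
    and d: "of_nat d \<noteq> (0 :: 'a)" and a: "\<forall>i<d. a i \<noteq> 0"
    and bezout: "\<forall>i<d. int (r i) * int (rt i) + int s * t i = 1"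
    and inj_f: "inj (poly f)" and "c \<noteq> 0" and "k < d" and "c ^ s = \<omega> ^ k"
  shows "{i. i < d \<and> (poly f c / a i) ^ s = \<omega> ^ (i * r i)} = {k}"
proof -
  have fc: "poly f c = a k * c ^ r k"
    unfolding f_def using root inj_root d \<open>k < d\<close> \<open>c ^ s = \<omega> ^ k\<close> by (rule poly_cyclotomic_mapping_poly)
  have "poly f c / a k = c ^ r k"
    using fc a \<open>k < d\<close> by simp
  then have fibre_k: "(poly f c / a k) ^ s = \<omega> ^ (k * r k)"
    using \<open>c ^ s = \<omega> ^ k\<close> by (metis mult.commute power_mult)
  moreover have unique: "i = k" if "i < d" and fibre: "(poly f c / a i) ^ s = \<omega> ^ (i * r i)" for i
  proof -
    define x where "x = poly f c / a i"
    define c' where "c' = (\<omega> ^ i) powi t i * x ^ rt i"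
    have x0: "x \<noteq> 0"
      unfolding x_def using fc a \<open>c \<noteq> 0\<close> \<open>i < d\<close> \<open>k < d\<close> by simp
    have w0: "\<omega> ^ i \<noteq> 0"
      using root_of_unity_nonzero[OF root d] by simp
    have xs: "x ^ s = (\<omega> ^ i) ^ r i"
      using fibre unfolding x_def by (simp add: power_mult)
    have bezout_i: "int (r i) * int (rt i) + int s * t i = 1"
      using bezout \<open>i < d\<close> by blast
    have c': "c' ^ s = \<omega> ^ i" "c' ^ r i = x"
      unfolding c'_def by (fact power_bezout_root[OF x0 w0 xs bezout_i])+
    have "poly f c' = a i * c' ^ r i"
      unfolding f_def using root inj_root d \<open>i < d\<close> c'(1) by (rule poly_cyclotomic_mapping_poly)
    also have "\<dots> = poly f c"
      using c'(2) a \<open>i < d\<close> unfolding x_def by simp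
    finally have "c' = c"
      by (rule injD[OF inj_f])
    then have "\<omega> ^ i = \<omega> ^ k"
      using c'(1) \<open>c ^ s = \<omega> ^ k\<close> by simp
    then show "i = k"
      using inj_root \<open>i < d\<close> \<open>k < d\<close> by (auto dest: inj_onD)
  qed
  ultimately show ?thesis
    using \<open>k < d\<close> by blast
qed

lemma poly_cyclotomic_mapping_inverse_poly_left_inverse:
  fixes \<omega> c :: "'a::field" and a :: "nat \<Rightarrow> 'a" and d s :: nat and r :: "nat \<Rightarrow> nat"
  defines "f \<equiv> cyclotomic_mapping_poly d s \<omega> a r"
  assumes root: "\<omega> ^ d = 1" and inj_root: "inj_on (\<lambda>i. \<omega> ^ i) {..<d}"
    and d: "of_nat d \<noteq> (0 :: 'a)" and a: "\<forall>i<d. a i \<noteq> 0"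
    and bezout: "\<forall>i<d. int (r i) * int (rt i) + int s * t i = 1"
    and inj_f: "inj (poly f)" and roots: "\<forall>i<d. ((poly f c / a i) ^ s) ^ d = 1"
    and "c \<noteq> 0" and "k < d" and "c ^ s = \<omega> ^ k"
  shows "poly (cyclotomic_mapping_inverse_poly d s \<omega> a r rt t) (poly f c) = c"
proof -
  have "poly (cyclotomic_mapping_inverse_poly d s \<omega> a r rt t) (poly f c)
      = \<omega> powi (int k * t k) * (poly f c / a k) ^ rt k"
    using poly_cyclotomic_mapping_inverse_poly[OF root d roots]
      cyclotomic_mapping_inverse_index[OF root inj_root d a bezout inj_f[unfolded f_def] assms(9-11)]
    unfolding f_def by simp
  also have "\<dots> = (c ^ s) powi t k * (c ^ r k) ^ rt k"
    using poly_cyclotomic_mapping_poly[OF root inj_root d \<open>k < d\<close> \<open>c ^ s = \<omega> ^ k\<close>] a \<open>k < d\<close>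
      \<open>c ^ s = \<omega> ^ k\<close>
    unfolding f_def by (simp add: power_int_power)
  also have "\<dots> = c"
    using power_bezout_decompose \<open>c \<noteq> 0\<close> bezout \<open>k < d\<close> by blast
  finally show ?thesis .
qed

theorem theorem3p3:
  fixes d s :: nat and r rt :: "nat \<Rightarrow> nat" and t :: "nat \<Rightarrow> int"
    and a :: "nat \<Rightarrow> 'a::{field,finite}" and \<xi> \<omega> :: 'a
  assumes "0 < d" and "0 < s" and "card (UNIV :: 'a set) - 1 = d * s"
    and "\<forall>i<d. 0 < r i"
    and "\<forall>i<d. a i \<noteq> 0"
    and "primitive_element \<xi>" and "\<omega> = \<xi> ^ s"
    and "\<forall>i<d. 1 \<le> rt i \<and> rt i < s \<and> int (r i) * int (rt i) + int s * t i = 1"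
    and "perm_poly (smult (inverse (of_nat d))
           (\<Sum>i<d. \<Sum>j<d. monom (a i * \<omega> powi (- (int i * int j))) (r i + j * s)))"
  shows "\<forall>c. poly (smult (inverse (of_nat d))
           (\<Sum>i<d. \<Sum>j<d. smult (\<omega> powi (int i * (t i - int j * int (r i))))
                                ([:0, inverse (a i):] ^ (rt i + j * s))))
         (poly (smult (inverse (of_nat d))
           (\<Sum>i<d. \<Sum>j<d. monom (a i * \<omega> powi (- (int i * int j))) (r i + j * s))) c) = c"
proof -
  let ?f = "cyclotomic_mapping_poly d s \<omega> a r"
  let ?g = "cyclotomic_mapping_inverse_poly d s \<omega> a r rt t"
  have \<xi>: "\<xi> \<noteq> 0"
    using assms(6) by (simp add: primitive_element_def)
  have root: "\<omega> ^ d = 1"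
    using finite_field_power_power_eq_1[OF \<xi> assms(3)] assms(7) by simp
  have inj_root: "inj_on (\<lambda>i. \<omega> ^ i) {..<d}"
    using inj_on_primitive_element_power[OF assms(6,3,2)] assms(7) by simp
  have d: "of_nat d \<noteq> (0 :: 'a)"
    using assms(3) by (intro of_nat_dvd_card_minus_one_neq_0) simp
  have inj_f: "inj (poly ?f)"
    using assms(9) by (simp add: perm_poly_def cyclotomic_mapping_poly_def bij_is_inj)
  have "poly ?g (poly ?f c) = c" for c
  proof (cases "c = 0")
    case True
    then show ?thesis
      using assms(4,8) by (simp add: poly_cyclotomic_mapping_poly_0 poly_cyclotomic_mapping_inverse_poly_0 Suc_le_eq)
  next
    case False
    then obtain k where k: "k < d" "c ^ s = \<omega> ^ k"
      using primitive_element_power_coset[OF assms(6,3)] assms(7) by metis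
    then have "poly ?f c \<noteq> 0"
      using poly_cyclotomic_mapping_poly[OF root inj_root d k] False assms(5) by simp
    then have "\<forall>i<d. ((poly ?f c / a i) ^ s) ^ d = 1"
      using finite_field_power_power_eq_1[OF _ assms(3)] assms(5) by simp
    then show ?thesis
      using poly_cyclotomic_mapping_inverse_poly_left_inverse[OF root inj_root d assms(5)] assms(8)
        inj_f False k by simp
  qed
  then show ?thesis
    unfolding cyclotomic_mapping_poly_def cyclotomic_mapping_inverse_poly_def by blast
qed

end
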